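(* Let $P$ be a full-dimensional convex polytope in $\mathbb{R}^d$ and let $f:\mathbb{R}^d\to\mathbb{C}$ be continuous on $P$ and equal to $0$ outside $P$. Then $$\sum_{x\in\mathbb{Z}^d}f(x)\,\omega_P(x) = \lim_{\epsilon\to0^+}\sum_{x\in\mathbb{Z}^d}(f*\mathcal{G}_\epsilon)(x).$$
   Context: $\mathcal{G}_\epsilon(x) := \epsilon^{-d/2}e^{-\pi\|x\|^2/\epsilon}$ for $\epsilon>0$; $*$ is convolution; $\omega_P(x) := \lim_{r\to0^+}\frac{\mathrm{vol}(B(x,r)\cap P)}{\mathrm{vol}(B(x,r))}$. The left-hand side is a finite sum since $P$ is compact. *)

theory Defs
  imports "HOL-Analysis.Analysis"
begin

definition int_lattice :: "(real ^ 'n) set" where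
  "int_lattice = {x. \<forall>i. x $ i \<in> \<int>}"

definition gauss_kernel :: "real \<Rightarrow> real ^ 'n \<Rightarrow> real" where
  "gauss_kernel eps x = eps powr (- real CARD('n) / 2) * exp (- pi * (norm x)^2 / eps)"

definition gauss_conv :: "real \<Rightarrow> (real ^ 'n \<Rightarrow> complex) \<Rightarrow> real ^ 'n \<Rightarrow> complex" where
  "gauss_conv eps f x = (\<integral>y. f y * complex_of_real (gauss_kernel eps (x - y)) \<partial>lborel)"

definition solid_angle :: "(real ^ 'n) set \<Rightarrow> real ^ 'n \<Rightarrow> real" where
  "solid_angle P x = Lim (at_right 0)
     (\<lambda>r. measure lebesgue (ball x r \<inter> P) / measure lebesgue (ball x r))"

end

theory Submission
  imports Defs "HOL-Probability.Probability" "HOL-Real_Asymp.Real_Asymp"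
begin

text \<open>Near a point \<open>x\<close> the polytope coincides with \<open>x + K\<close> for its tangent cone \<open>K\<close>, and \<open>f\<close> is
  close to \<open>f x\<close> times the indicator of \<open>x + K\<close>. The heat kernel is radial with total mass 1, so a
  layer-cake computation gives \<open>\<integral>\<^sub>K G\<^sub>\<epsilon> = vol (K \<inter> B) / vol B = \<omega>\<^sub>P(x)\<close> for every \<open>\<epsilon>\<close>, while the mass
  of \<open>G\<^sub>\<epsilon>\<close> outside a ball of radius \<open>\<delta>\<close> is \<open>O(exp (- \<pi> \<delta>\<^sup>2 / (2 \<epsilon>)))\<close>. Hence
  \<open>(f * G\<^sub>\<epsilon>)(x) \<rightarrow> f(x) \<omega>\<^sub>P(x)\<close> at every point. Since \<open>f\<close> is bounded with bounded support,
  \<open>|(f * G\<^sub>\<epsilon>)(x)| \<le> C exp (- \<pi> |x|\<^sup>2 / 4)\<close> uniformly for \<open>\<epsilon> \<le> 1\<close>, and dominated convergence for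
  sums over \<open>\<int>\<^sup>d\<close> finishes the proof.\<close>

section \<open>Gaussian integrals over cones\<close>

lemma nn_integral_exp_neg_square:
  fixes a :: real
  assumes "a > 0"
  shows "(\<integral>\<^sup>+x. ennreal (exp (- a * x\<^sup>2)) \<partial>lborel) = ennreal (sqrt (pi / a))"
proof -
  define s where "s = sqrt (1 / (2 * a))"
  have s: "s > 0" "s\<^sup>2 = 1 / (2 * a)"
    using assms by (auto simp: s_def)
  have density: "exp (- a * x\<^sup>2) = sqrt (pi / a) * normal_density 0 s x" for x
  proof -
    have "sqrt (2 * pi * s\<^sup>2) = sqrt (pi / a)" "- (x - 0)\<^sup>2 / (2 * s\<^sup>2) = - a * x\<^sup>2"
      using s assms by (simp_all add: field_simps)
    then show ?thesis
      using assms by (simp add: normal_density_def)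
  qed
  have "(\<integral>\<^sup>+x. ennreal (exp (- a * x\<^sup>2)) \<partial>lborel)
      = ennreal (\<integral>x. sqrt (pi / a) * normal_density 0 s x \<partial>lborel)"
    unfolding density using s assms
    by (intro nn_integral_eq_integral AE_I2) (auto intro!: mult_nonneg_nonneg)
  also have "\<dots> = ennreal (sqrt (pi / a))"
    using s by simp
  finally show ?thesis .
qed

lemma nn_integral_exp_neg_norm_square:
  fixes a :: real
  assumes "a > 0"
  shows "(\<integral>\<^sup>+x. ennreal (exp (- a * (norm x)\<^sup>2)) \<partial>(lborel :: 'a::euclidean_space measure))
       = ennreal (sqrt (pi / a) ^ DIM('a))"
proof -
  have product: "exp (- a * (norm x)\<^sup>2) = (\<Prod>b\<in>Basis. exp (- a * (x \<bullet> b)\<^sup>2))" for x :: 'a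
  proof -
    have "(norm x)\<^sup>2 = (\<Sum>b\<in>Basis. (x \<bullet> b)\<^sup>2)"
      unfolding power2_norm_eq_inner by (subst euclidean_inner) (simp add: power2_eq_square)
    then show ?thesis
      by (simp add: sum_distrib_left exp_sum[symmetric] sum_negf)
  qed
  have "(\<integral>\<^sup>+x. ennreal (exp (- a * (norm x)\<^sup>2)) \<partial>(lborel :: 'a measure))
      = (\<integral>\<^sup>+x. (\<Prod>b\<in>Basis. ennreal (exp (- a * (x \<bullet> b)\<^sup>2))) \<partial>(lborel :: 'a measure))"
    by (simp only: product prod_ennreal exp_ge_zero)
  also have "\<dots> = (\<Prod>b\<in>(Basis :: 'a set). \<integral>\<^sup>+x. ennreal (exp (- a * x\<^sup>2)) \<partial>lborel)"
    by (rule nn_integral_lborel_prod) auto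
  finally show ?thesis
    using nn_integral_exp_neg_square[OF assms] assms by (simp add: ennreal_power)
qed

lemma ennreal_exp_neg_square_eq_nn_integral:
  fixes a r :: real
  assumes a: "a > 0" and r: "r \<ge> 0"
  shows "ennreal (exp (- a * r\<^sup>2))
       = (\<integral>\<^sup>+s. ennreal (2 * a * s * exp (- a * s\<^sup>2)) * indicator {r<..} s \<partial>lborel)"
proof -
  have "filterlim (\<lambda>s::real. - a * s\<^sup>2) at_bot at_top"
    using a by real_asymp
  then have "((\<lambda>s::real. - exp (- a * s\<^sup>2)) \<longlongrightarrow> - 0) at_top"
    by (intro tendsto_minus filterlim_compose[OF exp_at_bot])
  then have "(\<integral>\<^sup>+s. ennreal (2 * a * s * exp (- a * s\<^sup>2)) * indicator {r..} s \<partial>lborel)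
      = 0 - (- exp (- a * r\<^sup>2))"
    using a r by (intro nn_integral_FTC_atLeast)
      (auto intro!: derivative_eq_intros mult_nonneg_nonneg simp: algebra_simps)
  also have "(\<integral>\<^sup>+s. ennreal (2 * a * s * exp (- a * s\<^sup>2)) * indicator {r..} s \<partial>lborel)
      = (\<integral>\<^sup>+s. ennreal (2 * a * s * exp (- a * s\<^sup>2)) * indicator {r<..} s \<partial>lborel)"
    by (intro nn_integral_cong_AE AE_I[where N="{r}"]) (auto split: split_indicator)
  finally show ?thesis
    by simp
qed

text \<open>Layer-cake decomposition: integrate over the balls \<open>ball 0 s\<close> first.\<close>
lemma nn_integral_indicator_exp_neg_norm_square:
  fixes K :: "'a::euclidean_space set"
  assumes [measurable]: "K \<in> sets borel" and a: "a > 0"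
  shows "(\<integral>\<^sup>+v. indicator K v * ennreal (exp (- a * (norm v)\<^sup>2)) \<partial>lborel)
       = (\<integral>\<^sup>+s. ennreal (2 * a * s * exp (- a * s\<^sup>2)) * emeasure lborel (K \<inter> ball 0 s) \<partial>lborel)"
proof -
  let ?w = "\<lambda>s. ennreal (2 * a * s * exp (- a * s\<^sup>2))"
  have "(\<integral>\<^sup>+v. indicator K v * ennreal (exp (- a * (norm v)\<^sup>2)) \<partial>lborel)
      = (\<integral>\<^sup>+v. \<integral>\<^sup>+s. indicator K v * (?w s * indicator {norm v<..} s) \<partial>lborel \<partial>(lborel :: 'a measure))"
    by (intro nn_integral_cong, subst ennreal_exp_neg_square_eq_nn_integral[OF a norm_ge_zero])
      (simp add: nn_integral_cmult)
  also have "\<dots> = (\<integral>\<^sup>+s. \<integral>\<^sup>+v. indicator K v * (?w s * indicator {norm v<..} s) \<partial>(lborel :: 'a measure) \<partial>lborel)"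
  proof (rule lborel_pair.Fubini'[symmetric])
    have [measurable]: "Measurable.pred (borel \<Otimes>\<^sub>M borel) (\<lambda>x::'a \<times> real. snd x \<in> {norm (fst x)<..})"
      unfolding greaterThan_iff by measurable
    show "(\<lambda>(v, s). indicator K v * (?w s * indicator {norm v<..} s)) \<in> borel_measurable (lborel \<Otimes>\<^sub>M lborel)"
      by measurable
  qed
  also have "\<dots> = (\<integral>\<^sup>+s. ?w s * emeasure lborel (K \<inter> ball 0 s) \<partial>lborel)"
  proof (intro nn_integral_cong)
    fix s :: real
    have "(\<integral>\<^sup>+v. indicator K v * (?w s * indicator {norm v<..} s) \<partial>(lborel :: 'a measure))
        = (\<integral>\<^sup>+v. ?w s * indicator (K \<inter> ball 0 s) v \<partial>lborel)"
      by (intro nn_integral_cong) (auto split: split_indicator)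
    also have "\<dots> = ?w s * emeasure lborel (K \<inter> ball 0 s)"
      by (subst nn_integral_cmult) (auto intro!: borel_measurable_indicator)
    finally show "(\<integral>\<^sup>+v. indicator K v * (?w s * indicator {norm v<..} s) \<partial>(lborel :: 'a measure))
        = ?w s * emeasure lborel (K \<inter> ball 0 s)" .
  qed
  finally show ?thesis .
qed

lemma cone_inter_ball_affine_image:
  fixes K :: "'a::real_normed_vector set"
  assumes "cone K" and "r > 0"
  shows "(\<lambda>v. r *\<^sub>R v + x) ` (K \<inter> ball 0 1) = {y \<in> ball x r. y - x \<in> K}"
proof safe
  fix y assume y: "y \<in> ball x r" "y - x \<in> K"
  have "(1 / r) *\<^sub>R (y - x) \<in> K \<inter> ball 0 1"
    using y assms by (auto simp: cone_def dist_norm norm_minus_commute)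
  moreover have "y = r *\<^sub>R ((1 / r) *\<^sub>R (y - x)) + x"
    using assms by simp
  ultimately show "y \<in> (\<lambda>v. r *\<^sub>R v + x) ` (K \<inter> ball 0 1)"
    by blast
qed (use assms in \<open>auto simp: cone_def dist_norm\<close>)

lemma
  fixes K :: "'a::euclidean_space set"
  assumes "cone K" and "r > 0"
  shows emeasure_cone_inter_ball:
      "emeasure lebesgue {y \<in> ball x r. y - x \<in> K} = ennreal (r ^ DIM('a)) * emeasure lebesgue (K \<inter> ball 0 1)"
    and measure_cone_inter_ball:
      "measure lebesgue {y \<in> ball x r. y - x \<in> K} = r ^ DIM('a) * measure lebesgue (K \<inter> ball 0 1)"
  using emeasure_lebesgue_affine[of r x "K \<inter> ball 0 1"] measure_lebesgue_affine[of r x "K \<inter> ball 0 1"]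
  unfolding cone_inter_ball_affine_image[OF assms] using assms by (simp_all add: ennreal_power)

lemma nn_integral_cone_exp_neg_norm_square_factor:
  fixes K :: "'a::euclidean_space set"
  assumes K[measurable]: "K \<in> sets borel" and "cone K" and a: "a > 0"
  shows "(\<integral>\<^sup>+v. indicator K v * ennreal (exp (- a * (norm v)\<^sup>2)) \<partial>lborel)
       = (\<integral>\<^sup>+s. ennreal (2 * a * s * exp (- a * s\<^sup>2)) * ennreal (s ^ DIM('a)) \<partial>lborel)
           * emeasure lborel (K \<inter> ball 0 1)"
proof -
  have "ennreal (2 * a * s * exp (- a * s\<^sup>2)) * emeasure lborel (K \<inter> ball 0 s)
      = ennreal (2 * a * s * exp (- a * s\<^sup>2)) * ennreal (s ^ DIM('a)) * emeasure lborel (K \<inter> ball 0 1)" for s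
  proof (cases "s > 0")
    case True
    have "K \<inter> ball 0 s = {y \<in> ball 0 s. y - 0 \<in> K}"
      by auto
    then have "emeasure lborel (K \<inter> ball 0 s) = ennreal (s ^ DIM('a)) * emeasure lborel (K \<inter> ball 0 1)"
      using emeasure_cone_inter_ball[OF \<open>cone K\<close> True, of 0] by simp
    then show ?thesis
      by (simp add: mult.assoc)
  next
    case False
    then have "2 * a * s * exp (- a * s\<^sup>2) \<le> 0"
      using a by (intro mult_nonpos_nonneg mult_nonneg_nonpos) auto
    then have "ennreal (2 * a * s * exp (- a * s\<^sup>2)) = 0"
      by (rule ennreal_eq_0_iff[THEN iffD2])
    then show ?thesis
      by simp
  qed
  then show ?thesis
    unfolding nn_integral_indicator_exp_neg_norm_square[OF K a] by (simp only:) (rule nn_integral_multc, measurable)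
qed

definition cone_angle :: "'a::euclidean_space set \<Rightarrow> real" where
  "cone_angle K = measure lebesgue (K \<inter> ball 0 1) / measure lebesgue (ball (0::'a) 1)"

lemma cone_angle_nonneg: "cone_angle K \<ge> 0"
  by (simp add: cone_angle_def)

lemma cone_angle_UNIV: "cone_angle UNIV = 1"
  using content_ball_pos[of 1 0] by (simp add: cone_angle_def)

lemma nn_integral_cone_exp_neg_norm_square:
  fixes K :: "'a::euclidean_space set"
  assumes K: "K \<in> sets borel" and "cone K" and a: "a > 0"
  shows "(\<integral>\<^sup>+v. indicator K v * ennreal (exp (- a * (norm v)\<^sup>2)) \<partial>lborel)
       = ennreal (cone_angle K * sqrt (pi / a) ^ DIM('a))"
proof -
  define J where "J = (\<integral>\<^sup>+s. ennreal (2 * a * s * exp (- a * s\<^sup>2)) * ennreal (s ^ DIM('a)) \<partial>lborel)"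
  define m where "m L = measure lebesgue (L \<inter> ball (0::'a) 1)" for L
  have em: "emeasure lborel (L \<inter> ball 0 1) = ennreal (m L)" if "L \<in> sets borel" for L
  proof -
    have "emeasure lborel (L \<inter> ball 0 1) \<le> emeasure lborel (ball (0::'a) 1)"
      by (rule emeasure_mono) auto
    then have "emeasure lborel (L \<inter> ball 0 1) \<noteq> \<infinity>"
      using emeasure_lborel_ball_finite[of "0::'a" 1] by (auto simp: top_unique)
    then show ?thesis
      using that by (simp add: m_def emeasure_eq_ennreal_measure)
  qed
  have m1: "m UNIV > 0"
    using content_ball_pos[of 1 "0::'a"] by (simp add: m_def)
  \<comment> \<open>the radial factor \<open>J\<close> is read off from the case \<open>K = UNIV\<close>, where the integral is known\<close>
  have "ennreal (sqrt (pi / a) ^ DIM('a)) = J * ennreal (m UNIV)"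
    using nn_integral_cone_exp_neg_norm_square_factor[of "UNIV :: 'a set" a]
      nn_integral_exp_neg_norm_square[OF a, where 'a='a] em[of UNIV] a
    by (simp add: J_def)
  then have J: "J = ennreal (sqrt (pi / a) ^ DIM('a) / m UNIV)"
    using m1 a by (simp add: divide_ennreal[symmetric] ennreal_mult_divide_eq)
  have "(\<integral>\<^sup>+v. indicator K v * ennreal (exp (- a * (norm v)\<^sup>2)) \<partial>lborel) = J * ennreal (m K)"
    using nn_integral_cone_exp_neg_norm_square_factor[OF K \<open>cone K\<close> a, folded J_def] em[OF K] by simp
  also have "\<dots> = ennreal (m K / m UNIV * sqrt (pi / a) ^ DIM('a))"
    using m1 a by (simp add: J ennreal_mult[symmetric] m_def)
  also have "m K / m UNIV = cone_angle K"
    by (simp add: cone_angle_def m_def)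
  finally show ?thesis .
qed

section \<open>Convolution with the heat kernel\<close>

lemma borel_measurable_continuous_on_vanishing_outside:
  fixes f :: "'a::euclidean_space \<Rightarrow> 'b::real_normed_vector"
  assumes "closed P" and "continuous_on P f" and "\<And>x. x \<notin> P \<Longrightarrow> f x = 0"
  shows "f \<in> borel_measurable borel"
proof -
  have "(\<lambda>y. indicator P y *\<^sub>R f y) \<in> borel_measurable borel"
    using assms by (intro borel_measurable_continuous_on_indicator borel_closed)
  moreover have "(\<lambda>y. indicator P y *\<^sub>R f y) = f"
    using assms(3) by (auto simp: fun_eq_iff indicator_def)
  ultimately show ?thesis
    by simp
qed

lemma bounded_continuous_on_vanishing_outside:
  fixes f :: "'a::metric_space \<Rightarrow> 'b::real_normed_vector"
  assumes "compact P" and "continuous_on P f" and "\<And>x. x \<notin> P \<Longrightarrow> f x = 0"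
  obtains M where "\<And>x. norm (f x) \<le> M"
proof -
  have "bounded (f ` P)"
    using compact_imp_bounded[OF compact_continuous_image[OF assms(2,1)]] .
  then obtain M where M: "\<forall>y\<in>f ` P. norm y \<le> M"
    unfolding bounded_iff by blast
  have "norm (f x) \<le> max 0 M" for x
  proof (cases "x \<in> P")
    case True
    then show ?thesis
      using M by auto
  next
    case False
    then show ?thesis
      using assms(3) by simp
  qed
  then show ?thesis
    by (rule that)
qed

lemma gauss_kernel_nonneg: "gauss_kernel eps v \<ge> 0"
  by (simp add: gauss_kernel_def)

lemma gauss_kernel_commute: "gauss_kernel eps (x - y) = gauss_kernel eps (y - x)"
  by (simp add: gauss_kernel_def norm_minus_commute)

lemma borel_measurable_gauss_kernel[measurable]: "gauss_kernel eps \<in> borel_measurable borel"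
  unfolding gauss_kernel_def[abs_def] by measurable

lemma nn_integral_lborel_translate:
  fixes g :: "'a::euclidean_space \<Rightarrow> ennreal"
  assumes [measurable]: "g \<in> borel_measurable borel"
  shows "(\<integral>\<^sup>+y. g (y - x) \<partial>lborel) = (\<integral>\<^sup>+v. g v \<partial>lborel)"
proof -
  have "(\<integral>\<^sup>+y. g (y - x) \<partial>lborel) = (\<integral>\<^sup>+y. g (y - x) \<partial>distr lborel borel ((+) x))"
    by (simp add: lborel_distr_plus)
  also have "\<dots> = (\<integral>\<^sup>+v. g (x + v - x) \<partial>lborel)"
    by (subst nn_integral_distr) auto
  finally show ?thesis
    by simp
qed

lemma has_bochner_integral_gauss_kernel_cone:
  fixes K :: "(real ^ 'n) set"
  assumes K[measurable]: "K \<in> sets borel" and "cone K" and eps: "eps > 0"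
  shows "has_bochner_integral lborel (\<lambda>y. indicator K (y - x) * gauss_kernel eps (x - y)) (cone_angle K)"
proof (rule has_bochner_integral_nn_integral)
  let ?g = "\<lambda>v. indicator K v * ennreal (gauss_kernel eps v)"
  have "(\<integral>\<^sup>+y. ennreal (indicator K (y - x) * gauss_kernel eps (x - y)) \<partial>lborel)
      = (\<integral>\<^sup>+y. ?g (y - x) \<partial>lborel)"
    by (intro nn_integral_cong) (simp add: gauss_kernel_commute[of eps x] split: split_indicator)
  also have "\<dots> = (\<integral>\<^sup>+v. ?g v \<partial>lborel)"
    by (rule nn_integral_lborel_translate) measurable
  also have "\<dots> = ennreal (eps powr (- real CARD('n) / 2))
      * (\<integral>\<^sup>+v. indicator K v * ennreal (exp (- (pi / eps) * (norm v)\<^sup>2)) \<partial>lborel)"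
    by (subst nn_integral_cmult[symmetric])
      (auto intro!: nn_integral_cong simp: gauss_kernel_def ennreal_mult mult_ac)
  also have "\<dots> = ennreal (eps powr (- real CARD('n) / 2))
      * ennreal (cone_angle K * sqrt (pi / (pi / eps)) ^ CARD('n))"
    using nn_integral_cone_exp_neg_norm_square[OF K \<open>cone K\<close>, of "pi / eps"] eps by simp
  also have "\<dots> = ennreal (cone_angle K)"
  proof -
    have "sqrt (pi / (pi / eps)) = eps powr (1 / 2)"
      using eps by (simp add: powr_half_sqrt)
    then have "sqrt (pi / (pi / eps)) ^ CARD('n) = eps powr (real CARD('n) / 2)"
      using eps by (simp add: powr_realpow[symmetric] powr_powr)
    then have "eps powr (- real CARD('n) / 2) * sqrt (pi / (pi / eps)) ^ CARD('n) = 1"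
      using eps by (simp add: powr_add[symmetric])
    then show ?thesis
      by (simp add: ennreal_mult'[symmetric] cone_angle_nonneg mult.left_commute)
  qed
  finally show "(\<integral>\<^sup>+y. ennreal (indicator K (y - x) * gauss_kernel eps (x - y)) \<partial>lborel) = ennreal (cone_angle K)" .
qed (auto simp: cone_angle_nonneg gauss_kernel_nonneg)

lemma
  fixes x :: "real ^ 'n"
  assumes "eps > 0"
  shows integrable_gauss_kernel: "integrable lborel (\<lambda>y. gauss_kernel eps (x - y))"
    and integral_gauss_kernel: "(\<integral>y. gauss_kernel eps (x - y) \<partial>lborel) = 1"
  using has_bochner_integral_gauss_kernel_cone[of UNIV eps x] assms
  by (simp_all add: cone_angle_UNIV has_bochner_integral_iff)

lemma gauss_kernel_le_gauss_kernel_double: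
  fixes v :: "real ^ 'n"
  assumes eps: "eps > 0" and "0 \<le> \<delta>" "\<delta> \<le> norm v"
  shows "gauss_kernel eps v
       \<le> 2 powr (real CARD('n) / 2) * exp (- pi * \<delta>\<^sup>2 / (2 * eps)) * gauss_kernel (2 * eps) v"
proof -
  have "\<delta>\<^sup>2 \<le> (norm v)\<^sup>2"
    using assms by (intro power_mono) auto
  then have "exp (- pi * (norm v)\<^sup>2 / eps) \<le> exp (- pi * \<delta>\<^sup>2 / (2 * eps)) * exp (- pi * (norm v)\<^sup>2 / (2 * eps))"
    using eps by (simp add: exp_add[symmetric] field_simps)
  from mult_left_mono[OF this, of "(2 * eps) powr (- real CARD('n) / 2)"]
  have "(2 * eps) powr (- real CARD('n) / 2) * exp (- pi * (norm v)\<^sup>2 / eps)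
      \<le> (2 * eps) powr (- real CARD('n) / 2) * (exp (- pi * \<delta>\<^sup>2 / (2 * eps)) * exp (- pi * (norm v)\<^sup>2 / (2 * eps)))"
    by simp
  moreover have "eps powr (- real CARD('n) / 2) = 2 powr (real CARD('n) / 2) * (2 * eps) powr (- real CARD('n) / 2)"
    using eps by (simp add: powr_mult powr_minus field_simps)
  ultimately show ?thesis
    unfolding gauss_kernel_def by (simp add: mult_ac)
qed

lemma
  fixes x :: "real ^ 'n"
  assumes eps: "eps > 0" and \<delta>: "0 \<le> \<delta>"
  shows integrable_gauss_kernel_tail:
      "integrable lborel (\<lambda>y. indicator {y. \<delta> \<le> dist x y} y * gauss_kernel eps (x - y))"
    and integral_gauss_kernel_tail_le:
      "(\<integral>y. indicator {y. \<delta> \<le> dist x y} y * gauss_kernel eps (x - y) \<partial>lborel)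
         \<le> 2 powr (real CARD('n) / 2) * exp (- pi * \<delta>\<^sup>2 / (2 * eps))"
proof -
  define C where "C = 2 powr (real CARD('n) / 2) * exp (- pi * \<delta>\<^sup>2 / (2 * eps))"
  have eps2: "2 * eps > 0"
    using eps by simp
  have le: "indicator {y. \<delta> \<le> dist x y} y * gauss_kernel eps (x - y) \<le> C * gauss_kernel (2 * eps) (x - y)" for y
    using gauss_kernel_le_gauss_kernel_double[OF eps \<delta>, of "x - y"] gauss_kernel_nonneg[of "2 * eps" "x - y"]
    by (auto simp: C_def dist_norm split: split_indicator)
  have int2: "integrable lborel (\<lambda>y. C * gauss_kernel (2 * eps) (x - y))"
    using integrable_gauss_kernel[OF eps2, of x] by simp
  show int1: "integrable lborel (\<lambda>y. indicator {y. \<delta> \<le> dist x y} y * gauss_kernel eps (x - y))"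
    by (rule Bochner_Integration.integrable_bound[OF int2])
      (auto intro!: AE_I2 order_trans[OF le abs_ge_self] simp: gauss_kernel_nonneg)
  have "(\<integral>y. indicator {y. \<delta> \<le> dist x y} y * gauss_kernel eps (x - y) \<partial>lborel)
      \<le> (\<integral>y. C * gauss_kernel (2 * eps) (x - y) \<partial>lborel)"
    by (rule integral_mono[OF int1 int2 le])
  also have "\<dots> = C"
    using integral_gauss_kernel[OF eps2, of x] by simp
  finally show "(\<integral>y. indicator {y. \<delta> \<le> dist x y} y * gauss_kernel eps (x - y) \<partial>lborel)
         \<le> 2 powr (real CARD('n) / 2) * exp (- pi * \<delta>\<^sup>2 / (2 * eps))"
    by (simp add: C_def)
qed

lemma integrable_gauss_conv:
  fixes h :: "real ^ 'n \<Rightarrow> complex"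
  assumes [measurable]: "h \<in> borel_measurable lborel" and "\<And>y. norm (h y) \<le> M" and "eps > 0"
  shows "integrable lborel (\<lambda>y. h y * complex_of_real (gauss_kernel eps (x - y)))"
proof (rule Bochner_Integration.integrable_bound)
  show "integrable lborel (\<lambda>y. M * gauss_kernel eps (x - y))"
    using integrable_gauss_kernel[OF \<open>eps > 0\<close>, of x] by simp
  show "AE y in lborel. norm (h y * complex_of_real (gauss_kernel eps (x - y))) \<le> norm (M * gauss_kernel eps (x - y))"
    using assms(2) order_trans[OF norm_ge_zero assms(2)]
    by (intro AE_I2) (simp add: norm_mult gauss_kernel_nonneg abs_mult mult_right_mono)
qed measurable

lemma gauss_conv_diff:
  fixes f g :: "real ^ 'n \<Rightarrow> complex"
  assumes "f \<in> borel_measurable lborel" "\<And>y. norm (f y) \<le> M"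
    and "g \<in> borel_measurable lborel" "\<And>y. norm (g y) \<le> M" and "eps > 0"
  shows "gauss_conv eps (\<lambda>y. f y - g y) x = gauss_conv eps f x - gauss_conv eps g x"
  unfolding gauss_conv_def left_diff_distrib
  using assms by (intro Bochner_Integration.integral_diff integrable_gauss_conv)

lemma norm_gauss_conv_le:
  fixes h :: "real ^ 'n \<Rightarrow> complex"
  assumes [measurable]: "h \<in> borel_measurable lborel" and M: "\<And>y. norm (h y) \<le> M"
    and near: "\<And>y. dist x y < \<delta> \<Longrightarrow> norm (h y) \<le> \<eta>" and "0 \<le> \<eta>" "0 \<le> \<delta>" and eps: "eps > 0"
  shows "norm (gauss_conv eps h x) \<le> \<eta> + M * 2 powr (real CARD('n) / 2) * exp (- pi * \<delta>\<^sup>2 / (2 * eps))"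
proof -
  let ?G = "\<lambda>y. gauss_kernel eps (x - y)" and ?T = "\<lambda>y. indicator {y. \<delta> \<le> dist x y} y * gauss_kernel eps (x - y)"
  have "M \<ge> 0"
    using order_trans[OF norm_ge_zero M] .
  have "norm (gauss_conv eps h x) \<le> (\<integral>y. norm (h y * complex_of_real (?G y)) \<partial>lborel)"
    unfolding gauss_conv_def by (rule integral_norm_bound)
  also have "\<dots> \<le> (\<integral>y. \<eta> * ?G y + M * ?T y \<partial>lborel)"
  proof (rule integral_mono)
    show "integrable lborel (\<lambda>y. norm (h y * complex_of_real (?G y)))"
      using integrable_gauss_conv[OF assms(1) M eps] by (rule integrable_norm)
    show "integrable lborel (\<lambda>y. \<eta> * ?G y + M * ?T y)"
      using integrable_gauss_kernel[OF eps, of x] integrable_gauss_kernel_tail[OF eps \<open>0 \<le> \<delta>\<close>, of x] by simp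
    fix y
    show "norm (h y * complex_of_real (?G y)) \<le> \<eta> * ?G y + M * ?T y"
    proof (cases "dist x y < \<delta>")
      case True
      then show ?thesis
        using near[of y] by (simp add: norm_mult gauss_kernel_nonneg mult_right_mono)
    next
      case False
      then show ?thesis
        using M[of y] \<open>0 \<le> \<eta>\<close> by (simp add: norm_mult gauss_kernel_nonneg mult_right_mono add_increasing)
    qed
  qed
  also have "\<dots> = \<eta> + M * (\<integral>y. ?T y \<partial>lborel)"
    using integrable_gauss_kernel[OF eps, of x] integrable_gauss_kernel_tail[OF eps \<open>0 \<le> \<delta>\<close>, of x]
    by (simp add: integral_gauss_kernel[OF eps, of x])
  also have "\<dots> \<le> \<eta> + M * (2 powr (real CARD('n) / 2) * exp (- pi * \<delta>\<^sup>2 / (2 * eps)))"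
    using integral_gauss_kernel_tail_le[OF eps \<open>0 \<le> \<delta>\<close>, of x] \<open>M \<ge> 0\<close> by (simp add: mult_left_mono)
  finally show ?thesis
    by (simp add: mult_ac)
qed

lemma half_square_minus_square_le:
  fixes t R :: real
  assumes "0 \<le> t" and "0 \<le> R"
  shows "t\<^sup>2 / 2 - R\<^sup>2 \<le> (max 0 (t - R))\<^sup>2"
proof (cases "R \<le> t")
  case True
  have "0 \<le> (t - 2 * R)\<^sup>2"
    by simp
  then show ?thesis
    using True by (simp add: power2_eq_square algebra_simps)
next
  case False
  then have "t\<^sup>2 \<le> R\<^sup>2"
    using assms by (intro power_mono) auto
  then show ?thesis
    using False by (simp add: order_trans[of _ "R\<^sup>2"])
qed

lemma norm_gauss_conv_le_gaussian:
  fixes f :: "real ^ 'n \<Rightarrow> complex"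
  assumes f: "f \<in> borel_measurable lborel" and M: "\<And>y. norm (f y) \<le> M"
    and support: "\<And>y. f y \<noteq> 0 \<Longrightarrow> norm y \<le> R" and "0 \<le> R" and eps: "0 < eps" "eps \<le> s"
  shows "norm (gauss_conv eps f x)
       \<le> M * 2 powr (real CARD('n) / 2) * exp (pi * R\<^sup>2 / (2 * s)) * exp (- (pi / (4 * s)) * (norm x)\<^sup>2)"
proof -
  have "s > 0"
    using eps by simp
  define \<Delta> where "\<Delta> = max 0 (norm x - R)"
  have "f y = 0" if "dist x y < \<Delta>" for y
  proof (rule ccontr)
    assume "f y \<noteq> 0"
    then show False
      using support[of y] norm_triangle_ineq2[of x y] that by (auto simp: \<Delta>_def dist_norm less_max_iff_disj)
  qed
  then have "norm (gauss_conv eps f x) \<le> 0 + M * 2 powr (real CARD('n) / 2) * exp (- pi * \<Delta>\<^sup>2 / (2 * eps))"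
    by (intro norm_gauss_conv_le[OF f M _ order_refl _ eps(1)]) (auto simp: \<Delta>_def)
  also have "exp (- pi * \<Delta>\<^sup>2 / (2 * eps)) \<le> exp (- pi * \<Delta>\<^sup>2 / (2 * s))"
    using eps by (simp add: frac_le mult_left_mono)
  also have "\<dots> \<le> exp (pi * R\<^sup>2 / (2 * s)) * exp (- (pi / (4 * s)) * (norm x)\<^sup>2)"
  proof -
    have "(norm x)\<^sup>2 / 2 - R\<^sup>2 \<le> \<Delta>\<^sup>2"
      unfolding \<Delta>_def using \<open>0 \<le> R\<close> by (rule half_square_minus_square_le[OF norm_ge_zero])
    moreover define c where "c = pi / (2 * s)"
    ultimately have "c * ((norm x)\<^sup>2 / 2 - R\<^sup>2) \<le> c * \<Delta>\<^sup>2"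
      using \<open>s > 0\<close> by (intro mult_left_mono) auto
    then have "- c * \<Delta>\<^sup>2 \<le> c * R\<^sup>2 + - (c / 2) * (norm x)\<^sup>2"
      by (simp add: algebra_simps)
    moreover have "pi * \<Delta>\<^sup>2 / (2 * s) = c * \<Delta>\<^sup>2" "pi * R\<^sup>2 / (2 * s) = c * R\<^sup>2" "pi * (norm x)\<^sup>2 / (4 * s) = c * (norm x)\<^sup>2 / 2"
      by (simp_all add: c_def)
    ultimately show ?thesis
      by (simp add: exp_add[symmetric])
  qed
  finally show ?thesis
    using order_trans[OF norm_ge_zero M] by (simp add: mult_left_mono mult.assoc)
qed

lemma gauss_conv_cone_indicator:
  fixes K :: "(real ^ 'n) set"
  assumes "K \<in> sets borel" and "cone K" and "eps > 0"
  shows "gauss_conv eps (\<lambda>y. c * complex_of_real (indicator K (y - x))) x = c * complex_of_real (cone_angle K)"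
proof -
  have "gauss_conv eps (\<lambda>y. c * complex_of_real (indicator K (y - x))) x
      = (\<integral>y. c * complex_of_real (indicator K (y - x) * gauss_kernel eps (x - y)) \<partial>lborel)"
    unfolding gauss_conv_def by (intro Bochner_Integration.integral_cong) (simp_all add: mult.assoc)
  also have "\<dots> = c * complex_of_real (\<integral>y. indicator K (y - x) * gauss_kernel eps (x - y) \<partial>lborel)"
    by (simp only: integral_mult_right_zero integral_complex_of_real)
  finally show ?thesis
    using has_bochner_integral_gauss_kernel_cone[OF assms, of x] by (simp add: has_bochner_integral_iff)
qed

lemma gauss_conv_tendsto_cone:
  fixes f :: "real ^ 'n \<Rightarrow> complex" and K :: "(real ^ 'n) set"
  assumes f[measurable]: "f \<in> borel_measurable lborel" and M: "\<And>y. norm (f y) \<le> M"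
    and K[measurable]: "K \<in> sets borel" and "cone K"
    and near: "\<And>\<eta>. \<eta> > 0 \<Longrightarrow> \<exists>\<delta>>0. \<forall>y. dist x y < \<delta> \<longrightarrow> norm (f y - f x * complex_of_real (indicator K (y - x))) \<le> \<eta>"
  shows "((\<lambda>eps. gauss_conv eps f x) \<longlongrightarrow> f x * complex_of_real (cone_angle K)) (at_right 0)"
proof (rule tendstoI)
  fix \<eta> :: real
  assume "\<eta> > 0"
  then obtain \<delta> where "\<delta> > 0"
    and \<delta>: "\<And>y. dist x y < \<delta> \<Longrightarrow> norm (f y - f x * complex_of_real (indicator K (y - x))) \<le> \<eta> / 2"
    using near[of "\<eta> / 2"] by auto
  define g where "g y = f x * complex_of_real (indicator K (y - x))" for y
  have g_measurable[measurable]: "g \<in> borel_measurable lborel"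
    unfolding g_def by measurable
  have g: "norm (g y) \<le> M" for y
    using M[of x] order_trans[OF norm_ge_zero M] by (simp add: g_def norm_mult indicator_def)
  have fg: "norm (f y - g y) \<le> 2 * M" for y
    using norm_triangle_ineq4[of "f y" "g y"] M[of y] g[of y] by simp
  define C where "C = 2 * M * 2 powr (real CARD('n) / 2)"
  have "((\<lambda>eps. C * exp (- pi * \<delta>\<^sup>2 / (2 * eps))) \<longlongrightarrow> 0) (at_right 0)"
    using \<open>\<delta> > 0\<close> by real_asymp
  then have "eventually (\<lambda>eps. C * exp (- pi * \<delta>\<^sup>2 / (2 * eps)) < \<eta> / 2) (at_right 0)"
    using \<open>\<eta> > 0\<close> by (intro order_tendstoD(2)) auto
  with eventually_at_right_less[of 0]
  show "eventually (\<lambda>eps. dist (gauss_conv eps f x) (f x * complex_of_real (cone_angle K)) < \<eta>) (at_right 0)"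
  proof eventually_elim
    case (elim eps)
    then have eps: "eps > 0"
      by simp
    have "gauss_conv eps f x - f x * complex_of_real (cone_angle K) = gauss_conv eps (\<lambda>y. f y - g y) x"
      using gauss_conv_diff[OF f M g_measurable g eps, of x] gauss_conv_cone_indicator[OF K \<open>cone K\<close> eps, of "f x" x]
      by (simp add: g_def[abs_def])
    also have "norm \<dots> \<le> \<eta> / 2 + C * exp (- pi * \<delta>\<^sup>2 / (2 * eps))"
      using norm_gauss_conv_le[where h = "\<lambda>y. f y - g y" and x = x, OF _ fg \<delta>[folded g_def] _ _ eps]
        \<open>\<eta> > 0\<close> \<open>\<delta> > 0\<close>
      by (simp add: C_def mult_ac)
    finally show ?case
      using elim by (simp add: dist_norm)
  qed
qed

section \<open>Polyhedra are locally cones\<close>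

text \<open>Near a point of a polyhedron only the constraints active at that point matter; they cut out
  the tangent cone.\<close>
lemma polyhedron_locally_tangent_cone:
  fixes P :: "'a::euclidean_space set"
  assumes "polyhedron P" and "x \<in> P"
  obtains K r where "closed K" and "cone K" and "r > 0" and "\<And>y. dist x y < r \<Longrightarrow> y \<in> P \<longleftrightarrow> y - x \<in> K"
proof -
  obtain F where F: "finite F" "P = \<Inter>F" "\<forall>h\<in>F. \<exists>a b. a \<noteq> 0 \<and> h = {x. a \<bullet> x \<le> b}"
    using assms(1) unfolding polyhedron_def by blast
  then obtain A B where "\<And>h. h \<in> F \<Longrightarrow> h = {x. A h \<bullet> x \<le> B h}"
    by metis
  then have in_P: "z \<in> P \<longleftrightarrow> (\<forall>h\<in>F. A h \<bullet> z \<le> B h)" for z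
    using F(2) by auto
  define K where "K = (\<Inter>h\<in>{h\<in>F. A h \<bullet> x = B h}. {v. A h \<bullet> v \<le> 0})"
  have "\<forall>\<^sub>F y in nhds x. A h \<bullet> x < B h \<longrightarrow> A h \<bullet> y < B h" for h
    using eventually_nhds_in_open[OF open_halfspace_lt, of x "A h" "B h"] by (cases "A h \<bullet> x < B h") auto
  then have "\<forall>\<^sub>F y in nhds x. \<forall>h\<in>F. A h \<bullet> x < B h \<longrightarrow> A h \<bullet> y < B h"
    using F(1) by (simp add: eventually_ball_finite)
  then obtain r where "r > 0" and inactive: "\<And>y h. dist y x < r \<Longrightarrow> h \<in> F \<Longrightarrow> A h \<bullet> x < B h \<Longrightarrow> A h \<bullet> y < B h"
    unfolding eventually_nhds_metric by blast
  have "y \<in> P \<longleftrightarrow> y - x \<in> K" if "dist x y < r" for y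
  proof
    show "y \<in> P \<Longrightarrow> y - x \<in> K"
      by (auto simp: K_def in_P inner_diff_right)
    assume "y - x \<in> K"
    then have "A h \<bullet> y \<le> B h" if "h \<in> F" for h
      using \<open>x \<in> P\<close> inactive[of y h] \<open>dist x y < r\<close> that
      by (force simp: K_def in_P inner_diff_right dist_commute)
    then show "y \<in> P"
      by (simp add: in_P)
  qed
  moreover have "closed K"
    by (auto simp: K_def intro!: closed_INT closed_halfspace_le)
  moreover have "cone K"
    by (auto simp: K_def cone_def mult_nonneg_nonpos)
  ultimately show ?thesis
    using that \<open>r > 0\<close> by blast
qed

lemma polyhedron_locally_cone:
  fixes P :: "'a::euclidean_space set" and x :: 'a
  assumes "polyhedron P"
  obtains K r where "closed K" and "cone K" and "r > 0" and "\<And>y. dist x y < r \<Longrightarrow> y \<in> P \<longleftrightarrow> y - x \<in> K"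
proof (cases "x \<in> P")
  case True
  then show ?thesis
    using polyhedron_locally_tangent_cone[OF assms] that by blast
next
  case False
  have "open (- P)"
    using polyhedron_imp_closed[OF assms] by auto
  then obtain r where "r > 0" "ball x r \<subseteq> - P"
    using False open_contains_ball by blast
  then show ?thesis
    by (intro that[of "{}" r]) auto
qed

lemma solid_angle_eq_cone_angle:
  fixes P K :: "(real ^ 'n) set"
  assumes "cone K" and "r0 > 0" and local: "\<And>y. dist x y < r0 \<Longrightarrow> y \<in> P \<longleftrightarrow> y - x \<in> K"
  shows "solid_angle P x = cone_angle K"
proof -
  have "measure lebesgue (ball x r \<inter> P) / measure lebesgue (ball x r) = cone_angle K"
    if r: "0 < r" "r < r0" for r
  proof -
    have "ball x r \<inter> P = {y \<in> ball x r. y - x \<in> K}"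
      using local r by auto
    moreover have "ball x r = {y \<in> ball x r. y - x \<in> UNIV}"
      by auto
    ultimately show ?thesis
      using measure_cone_inter_ball[OF \<open>cone K\<close> \<open>0 < r\<close>, of x] measure_cone_inter_ball[OF cone_univ \<open>0 < r\<close>, of x] r
      by (simp add: cone_angle_def)
  qed
  moreover have "\<forall>\<^sub>F r in at_right 0. 0 < r \<and> r < r0"
    using \<open>r0 > 0\<close> eventually_at_right_less[of 0] eventually_at_right_field by (auto intro: eventually_conj)
  ultimately have "((\<lambda>r. measure lebesgue (ball x r \<inter> P) / measure lebesgue (ball x r)) \<longlongrightarrow> cone_angle K) (at_right 0)"
    by (intro tendsto_eventually) (auto elim: eventually_mono)
  then show ?thesis
    unfolding solid_angle_def by (intro tendsto_Lim) auto
qed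

lemma gauss_conv_tendsto_solid_angle:
  fixes P :: "(real ^ 'n) set" and f :: "real ^ 'n \<Rightarrow> complex"
  assumes "polyhedron P" and f_cont: "continuous_on P f" and f_zero: "\<And>y. y \<notin> P \<Longrightarrow> f y = 0"
    and f: "f \<in> borel_measurable lborel" and M: "\<And>y. norm (f y) \<le> M"
  shows "((\<lambda>eps. gauss_conv eps f x) \<longlongrightarrow> f x * complex_of_real (solid_angle P x)) (at_right 0)"
proof -
  obtain K r where "closed K" and "cone K" and "r > 0" and local: "\<And>y. dist x y < r \<Longrightarrow> y \<in> P \<longleftrightarrow> y - x \<in> K"
    using polyhedron_locally_cone[OF \<open>polyhedron P\<close>, where x = x] by blast
  \<comment> \<open>a nonempty cone contains \<open>0\<close>\<close>
  have x_in_P: "x \<in> P" if "y \<in> P" "dist x y < r" for y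
    using local[of y] local[of x] that \<open>cone K\<close> \<open>r > 0\<close> cone_contains_0[of K] by auto
  have "\<exists>\<delta>>0. \<forall>y. dist x y < \<delta> \<longrightarrow> norm (f y - f x * complex_of_real (indicator K (y - x))) \<le> \<eta>"
    if "\<eta> > 0" for \<eta>
  proof -
    obtain d where "d > 0" and d: "\<And>y. y \<in> P \<Longrightarrow> x \<in> P \<Longrightarrow> dist y x < d \<Longrightarrow> dist (f y) (f x) < \<eta>"
      using f_cont \<open>\<eta> > 0\<close> unfolding continuous_on_iff by (cases "x \<in> P") (auto, blast)
    have "norm (f y - f x * complex_of_real (indicator K (y - x))) \<le> \<eta>" if "dist x y < min d r" for y
      using local[of y] x_in_P[of y] d[of y] f_zero[of y] that \<open>\<eta> > 0\<close>
      by (cases "y \<in> P") (auto simp: dist_norm norm_minus_commute dist_commute)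
    then show ?thesis
      using \<open>d > 0\<close> \<open>r > 0\<close> by (intro exI[of _ "min d r"]) auto
  qed
  moreover have "solid_angle P x = cone_angle K"
    using \<open>cone K\<close> \<open>r > 0\<close> local by (rule solid_angle_eq_cone_angle)
  ultimately show ?thesis
    using gauss_conv_tendsto_cone[OF f M borel_closed[OF \<open>closed K\<close>] \<open>cone K\<close>] by simp
qed

section \<open>Sums over the integer lattice\<close>

lemma summable_on_norm_dominated:
  fixes f :: "'a \<Rightarrow> 'b::banach"
  assumes "w summable_on A" and "\<And>x. x \<in> A \<Longrightarrow> norm (f x) \<le> w x"
  shows "f summable_on A"
  by (rule abs_summable_summable, rule Infinite_Sum.abs_summable_on_comparison_test'[OF assms(1)]) (rule assms(2))

lemma tendsto_infsum_zero_dominated: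
  fixes g :: "'i \<Rightarrow> 'a \<Rightarrow> 'b::banach" and w :: "'a \<Rightarrow> real"
  assumes w: "w summable_on A" and bound: "\<forall>\<^sub>F t in F. \<forall>x\<in>A. norm (g t x) \<le> w x"
    and lim: "\<And>x. x \<in> A \<Longrightarrow> ((\<lambda>t. g t x) \<longlongrightarrow> 0) F"
  shows "((\<lambda>t. infsum (g t) A) \<longlongrightarrow> 0) F"
proof (rule tendstoI)
  fix \<epsilon> :: real
  assume "\<epsilon> > 0"
  obtain E where E: "finite E" "E \<subseteq> A" and "dist (sum w E) (infsum w A) \<le> \<epsilon> / 2"
    using infsum_finite_approximation[OF w, of "\<epsilon> / 2"] \<open>\<epsilon> > 0\<close> by auto
  moreover have "infsum w A = sum w E + infsum w (A - E)"
    using infsum_Un_disjoint[OF summable_on_finite summable_on_subset_banach[OF w], of E "A - E"] E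
    by (simp add: Un_absorb1)
  ultimately have tail: "infsum w (A - E) \<le> \<epsilon> / 2"
    by (simp add: dist_real_def)
  have "\<forall>\<^sub>F t in F. norm (g t x) < \<epsilon> / (2 * (card E + 1))" if "x \<in> E" for x
    using tendstoD[OF lim, of x "\<epsilon> / (2 * (card E + 1))"] that E \<open>\<epsilon> > 0\<close> by auto
  then have "\<forall>\<^sub>F t in F. \<forall>x\<in>E. norm (g t x) < \<epsilon> / (2 * (card E + 1))"
    using E(1) by (simp add: eventually_ball_finite)
  with bound show "\<forall>\<^sub>F t in F. dist (infsum (g t) A) 0 < \<epsilon>"
  proof eventually_elim
    case (elim t)
    have summable: "g t summable_on B" if "B \<subseteq> A" for B
      using elim that by (intro summable_on_norm_dominated[OF summable_on_subset_banach[OF w that]]) auto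
    have split: "infsum (g t) A = sum (g t) E + infsum (g t) (A - E)"
      using infsum_Un_disjoint[OF summable_on_finite summable, of E "A - E"] E
      by (simp add: Un_absorb1)
    have "norm (infsum (g t) (A - E)) \<le> infsum w (A - E)"
      using elim by (intro norm_infsum_le[OF has_sum_infsum has_sum_infsum] summable
          summable_on_subset_banach[OF w]) auto
    moreover have "norm (sum (g t) E) \<le> (\<Sum>x\<in>E. \<epsilon> / (2 * (card E + 1)))"
      using elim by (intro order_trans[OF norm_sum sum_mono]) auto
    moreover have "(\<Sum>x\<in>E. \<epsilon> / (2 * (card E + 1))) < \<epsilon> / 2"
      using \<open>\<epsilon> > 0\<close> by (simp add: field_simps)
    ultimately show ?case
      using tail norm_triangle_ineq[of "sum (g t) E" "infsum (g t) (A - E)"]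
      unfolding dist_norm diff_zero split by linarith
  qed
qed

lemma tendsto_infsum_dominated:
  fixes g :: "'i \<Rightarrow> 'a \<Rightarrow> 'b::banach" and w :: "'a \<Rightarrow> real"
  assumes w: "w summable_on A" and bound: "\<forall>\<^sub>F t in F. \<forall>x\<in>A. norm (g t x) \<le> w x"
    and lim: "\<And>x. x \<in> A \<Longrightarrow> ((\<lambda>t. g t x) \<longlongrightarrow> l x) F"
  shows "((\<lambda>t. infsum (g t) A) \<longlongrightarrow> infsum l A) F"
proof (cases "F = bot")
  case False
  have l_le: "norm (l x) \<le> w x" if "x \<in> A" for x
  proof (rule Lim_norm_ubound[OF False lim[OF that]])
    show "\<forall>\<^sub>F t in F. norm (g t x) \<le> w x"
      using bound by (rule eventually_mono) (use that in blast)
  qed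
  have "((\<lambda>t. infsum (\<lambda>x. g t x - l x) A) \<longlongrightarrow> 0) F"
  proof (rule tendsto_infsum_zero_dominated[where w = "\<lambda>x. 2 * w x"])
    show "(\<lambda>x. 2 * w x) summable_on A"
      using w by (rule summable_on_cmult_right)
    show "\<forall>\<^sub>F t in F. \<forall>x\<in>A. norm (g t x - l x) \<le> 2 * w x"
      using bound
    proof (rule eventually_mono, intro ballI norm_triangle_le_diff)
      fix t x
      assume "\<forall>x\<in>A. norm (g t x) \<le> w x" and "x \<in> A"
      then show "norm (g t x) + norm (l x) \<le> 2 * w x"
        using l_le[of x] by auto
    qed
    show "((\<lambda>t. g t x - l x) \<longlongrightarrow> 0) F" if "x \<in> A" for x
      using tendsto_diff[OF lim[OF that] tendsto_const[of "l x"]] by simp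
  qed
  moreover have "\<forall>\<^sub>F t in F. infsum (\<lambda>x. g t x - l x) A = infsum (g t) A - infsum l A"
    using bound
  proof eventually_elim
    case (elim t)
    have "g t summable_on A" "(\<lambda>x. - l x) summable_on A"
      using elim l_le by (auto intro: summable_on_norm_dominated[OF w])
    then show ?case
      using infsum_add[of "g t" A "\<lambda>x. - l x"] by (simp add: infsum_uminus)
  qed
  ultimately have "((\<lambda>t. infsum (g t) A - infsum l A) \<longlongrightarrow> 0) F"
    by (rule Lim_transform_eventually)
  then show ?thesis
    by (rule LIM_zero_cancel)
qed simp

lemma summable_on_int_exp_neg_square:
  fixes c :: real
  assumes "c > 0"
  shows "(\<lambda>k::int. exp (- c * (real_of_int k)\<^sup>2)) summable_on UNIV"
proof -
  have "exp (- c * (real n)\<^sup>2) \<le> exp (- c) ^ n" for n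
  proof -
    have "real n \<le> (real n)\<^sup>2"
      by (cases n) (auto simp: power2_eq_square)
    then show ?thesis
      using assms by (simp add: exp_of_nat_mult[symmetric] mult.commute)
  qed
  then have "summable (\<lambda>n::nat. exp (- c * (real n)\<^sup>2))"
    using assms by (intro summable_comparison_test[OF _ summable_geometric[of "exp (- c)"]]) auto
  then have nat: "(\<lambda>n::nat. exp (- c * (real n)\<^sup>2)) summable_on UNIV"
    by (simp add: summable_on_UNIV_nonneg_real_iff)
  have "(\<lambda>k::int. exp (- c * (real_of_int k)\<^sup>2)) summable_on range int"
    using nat by (subst summable_on_reindex) (auto simp: o_def)
  moreover have "(\<lambda>k::int. exp (- c * (real_of_int k)\<^sup>2)) summable_on range (\<lambda>n. - int n)"
    using nat by (subst summable_on_reindex) (auto simp: o_def inj_on_def)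
  moreover have "range int \<union> range (\<lambda>n. - int n) = UNIV"
  proof -
    have "k \<in> range int \<union> range (\<lambda>n. - int n)" for k :: int
      using rangeI[of int "nat k"] rangeI[of "\<lambda>n. - int n" "nat (- k)"] by (cases "k \<ge> 0") auto
    then show ?thesis
      by blast
  qed
  ultimately show ?thesis
    by (metis summable_on_union)
qed

lemma int_lattice_eq_range: "int_lattice = range (\<lambda>g. \<chi> i. real_of_int (g i))"
proof safe
  fix x :: "real ^ 'n"
  assume "x \<in> int_lattice"
  then have "x = (\<chi> i. real_of_int \<lfloor>x $ i\<rfloor>)"
    by (simp add: int_lattice_def vec_eq_iff)
  then show "x \<in> range (\<lambda>g. \<chi> i. real_of_int (g i))"
    by (intro image_eqI[where x = "\<lambda>i. \<lfloor>x $ i\<rfloor>"]) auto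
qed (simp add: int_lattice_def)

lemma summable_on_int_lattice_exp_neg_norm_square:
  fixes c :: real
  assumes "c > 0"
  shows "(\<lambda>x::real ^ 'n. exp (- c * (norm x)\<^sup>2)) summable_on int_lattice"
proof -
  let ?h = "\<lambda>g. \<chi> i. real_of_int (g i) :: real ^ 'n"
  have "Infinite_Set_Sum.abs_summable_on (\<lambda>k::int. exp (- c * (real_of_int k)\<^sup>2)) UNIV"
    using summable_on_int_exp_neg_square[OF assms] by (simp flip: abs_summable_equivalent)
  then have "Infinite_Set_Sum.abs_summable_on (\<lambda>g. \<Prod>i\<in>(UNIV::'n set). exp (- c * (real_of_int (g i))\<^sup>2)) UNIV"
    using abs_summable_on_prod_PiE[of "UNIV :: 'n set" "\<lambda>_. UNIV" "\<lambda>_ k. exp (- c * (real_of_int k)\<^sup>2)"]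
    by (simp add: PiE_UNIV_domain)
  then have "(\<lambda>g. \<Prod>i\<in>(UNIV::'n set). exp (- c * (real_of_int (g i))\<^sup>2)) summable_on UNIV"
    by (simp flip: abs_summable_equivalent add: abs_summable_summable)
  moreover have "exp (- c * (norm (?h g))\<^sup>2) = (\<Prod>i\<in>UNIV. exp (- c * (real_of_int (g i))\<^sup>2))" for g
    by (simp add: norm_vec_def L2_set_def sum_nonneg sum_distrib_left exp_sum[symmetric] sum_negf)
  ultimately have "(\<lambda>x::real ^ 'n. exp (- c * (norm x)\<^sup>2)) \<circ> ?h summable_on UNIV"
    by (simp add: o_def)
  moreover have "inj ?h"
    by (auto simp: inj_on_def vec_eq_iff)
  ultimately show ?thesis
    unfolding int_lattice_eq_range by (subst summable_on_reindex)
qed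

lemma finite_int_lattice_Int_bounded:
  fixes S :: "(real ^ 'n) set"
  assumes "bounded S"
  shows "finite (int_lattice \<inter> S)"
proof -
  obtain r where r: "\<And>x. x \<in> S \<Longrightarrow> norm x \<le> r"
    using assms bounded_iff by blast
  let ?h = "\<lambda>g. \<chi> i. real_of_int (g i) :: real ^ 'n"
  have "int_lattice \<inter> S \<subseteq> ?h ` (PiE UNIV (\<lambda>_. {-\<lceil>r\<rceil>..\<lceil>r\<rceil>}))"
  proof
    fix x
    assume x: "x \<in> int_lattice \<inter> S"
    then have x_int: "\<And>i. x $ i \<in> \<int>"
      by (simp add: int_lattice_def)
    have "\<lfloor>x $ i\<rfloor> \<in> {-\<lceil>r\<rceil>..\<lceil>r\<rceil>}" for i
    proof -
      obtain z where z: "x $ i = of_int z"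
        using x_int[of i] Ints_cases by blast
      have "of_int \<bar>z\<bar> \<le> r"
        using component_le_norm_cart[of x i] r[of x] x z by simp
      then have "\<bar>z\<bar> \<le> \<lceil>r\<rceil>"
        by (simp add: le_ceiling_iff)
      then show ?thesis
        using z by auto
    qed
    moreover have "x = ?h (\<lambda>i. \<lfloor>x $ i\<rfloor>)"
      using x_int by (simp add: vec_eq_iff)
    ultimately show "x \<in> ?h ` (PiE UNIV (\<lambda>_. {-\<lceil>r\<rceil>..\<lceil>r\<rceil>}))"
      by (intro image_eqI[where x = "\<lambda>i. \<lfloor>x $ i\<rfloor>"]) auto
  qed
  then show ?thesis
    by (rule finite_subset) (auto intro!: finite_PiE)
qed

lemma infsum_int_lattice_eq_sum:
  fixes g :: "real ^ 'n \<Rightarrow> 'a::{comm_monoid_add, t2_space}"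
  assumes "bounded S" and "\<And>x. x \<notin> S \<Longrightarrow> g x = 0"
  shows "(\<Sum>\<^sub>\<infinity>x\<in>int_lattice. g x) = (\<Sum>x\<in>int_lattice \<inter> S. g x)"
proof -
  have "(\<Sum>\<^sub>\<infinity>x\<in>int_lattice. g x) = (\<Sum>\<^sub>\<infinity>x\<in>int_lattice \<inter> S. g x)"
    by (rule infsum_cong_neutral) (use assms(2) in auto)
  then show ?thesis
    using finite_int_lattice_Int_bounded[OF assms(1)] by simp
qed

lemma gauss_conv_int_lattice_sum_tendsto:
  fixes f :: "real ^ 'n \<Rightarrow> complex"
  assumes f: "f \<in> borel_measurable lborel" and M: "\<And>y. norm (f y) \<le> M"
    and support: "\<And>y. f y \<noteq> 0 \<Longrightarrow> norm y \<le> R" and "0 \<le> R"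
    and lim: "\<And>x. ((\<lambda>eps. gauss_conv eps f x) \<longlongrightarrow> L x) (at_right 0)"
  shows "\<forall>eps>0. gauss_conv eps f summable_on int_lattice"
    and "((\<lambda>eps. \<Sum>\<^sub>\<infinity>x\<in>int_lattice. gauss_conv eps f x) \<longlongrightarrow> (\<Sum>\<^sub>\<infinity>x\<in>int_lattice. L x)) (at_right 0)"
proof -
  define w where "w s x = M * 2 powr (real CARD('n) / 2) * exp (pi * R\<^sup>2 / (2 * s)) * exp (- (pi / (4 * s)) * (norm x)\<^sup>2)"
    for s and x :: "real ^ 'n"
  have decay: "norm (gauss_conv eps f x) \<le> w s x" if "0 < eps" "eps \<le> s" for eps s x
    unfolding w_def by (rule norm_gauss_conv_le_gaussian[OF f M support \<open>0 \<le> R\<close> that])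
  have w: "w s summable_on int_lattice" if "s > 0" for s
    unfolding w_def using that by (intro summable_on_cmult_right summable_on_int_lattice_exp_neg_norm_square) simp
  show "\<forall>eps>0. gauss_conv eps f summable_on int_lattice"
  proof (intro allI impI)
    fix eps :: real
    assume "eps > 0"
    then show "gauss_conv eps f summable_on int_lattice"
      by (rule summable_on_norm_dominated[OF w]) (rule decay[OF \<open>eps > 0\<close> order_refl])
  qed
  have bound: "\<forall>\<^sub>F eps in at_right 0. \<forall>x\<in>int_lattice. norm (gauss_conv eps f x) \<le> w 1 x"
    unfolding eventually_at_right_field
  proof (intro exI[of _ 1] conjI allI impI ballI)
    fix eps :: real and x
    assume "0 < eps" "eps < 1"
    then show "norm (gauss_conv eps f x) \<le> w 1 x"
      by (intro decay) auto
  qed simp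
  show "((\<lambda>eps. \<Sum>\<^sub>\<infinity>x\<in>int_lattice. gauss_conv eps f x) \<longlongrightarrow> (\<Sum>\<^sub>\<infinity>x\<in>int_lattice. L x)) (at_right 0)"
    using tendsto_infsum_dominated[OF w[OF zero_less_one] bound lim] .
qed

theorem theorem6p2:
  fixes P :: "(real ^ 'n) set" and f :: "real ^ 'n \<Rightarrow> complex"
  assumes "polytope P" and "convex P" and "interior P \<noteq> {}"
    and "continuous_on P f" and "\<And>x. x \<notin> P \<Longrightarrow> f x = 0"
  shows "(\<forall>eps>0. (gauss_conv eps f) summable_on int_lattice) \<and>
    ((\<lambda>eps. \<Sum>\<^sub>\<infinity>x\<in>int_lattice. gauss_conv eps f x) \<longlongrightarrow>
      (\<Sum>x\<in>int_lattice \<inter> P. f x * complex_of_real (solid_angle P x))) (at_right 0)"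
proof -
  have "compact P"
    using \<open>polytope P\<close> by (rule polytope_imp_compact)
  have f: "f \<in> borel_measurable lborel"
    using borel_measurable_continuous_on_vanishing_outside[OF compact_imp_closed[OF \<open>compact P\<close>] assms(4,5)]
    by simp
  obtain M where M: "\<And>x. norm (f x) \<le> M"
    using bounded_continuous_on_vanishing_outside[OF \<open>compact P\<close> assms(4,5)] by blast
  obtain R where "\<And>x. x \<in> P \<Longrightarrow> norm x \<le> R" and "R \<ge> 0"
    using compact_imp_bounded[OF \<open>compact P\<close>] bounded_pos less_imp_le by metis
  then have support: "\<And>x. f x \<noteq> 0 \<Longrightarrow> norm x \<le> R"
    using assms(5) by blast
  have lim: "((\<lambda>eps. gauss_conv eps f x) \<longlongrightarrow> f x * complex_of_real (solid_angle P x)) (at_right 0)" for x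
    using polytope_imp_polyhedron[OF \<open>polytope P\<close>] assms(4,5) f M by (rule gauss_conv_tendsto_solid_angle)
  have "(\<Sum>\<^sub>\<infinity>x\<in>int_lattice. f x * complex_of_real (solid_angle P x))
      = (\<Sum>x\<in>int_lattice \<inter> P. f x * complex_of_real (solid_angle P x))"
    by (rule infsum_int_lattice_eq_sum[OF compact_imp_bounded[OF \<open>compact P\<close>]]) (simp add: assms(5))
  then show ?thesis
    using gauss_conv_int_lattice_sum_tendsto[OF f M support \<open>R \<ge> 0\<close> lim] by simp
qed

end
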